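(* Let $\mathbf{x}_1,\dots,\mathbf{x}_n\in\mathbb{R}^d$ and $\mathbf{w}^*\in\mathbb{R}^d$, and set $y_i=\mathbf{x}_i^\top\mathbf{w}^*$ for all $i$; let $\bar\lambda_1=\sup_i\|\mathbf{x}_i\|^2$. Let $\eta>0$, $b_0>0$, $\mathbf{w}_0\in\mathbb{R}^d$, and let $\xi_0,\xi_1,\dots\in\{1,\dots,n\}$ be any sequence of indices. Define $G_j=(\mathbf{x}_{\xi_j}^\top\mathbf{w}_j-y_{\xi_j})\mathbf{x}_{\xi_j}$ and $\mathbf{w}_{j+1}=\mathbf{w}_j-\frac{\eta}{b_{j+1}}G_j$, where either (AdaGrad-Norm) $b_{j+1}^2=b_j^2+\|G_j\|^2$, or (AdaLoss) $b_{j+1}^2=b_j^2+(\mathbf{x}_{\xi_j}^\top\mathbf{w}_j-y_{\xi_j})^2$. Suppose $J\ge1$ is the first index such that $b_J>\eta\bar\lambda_1$, and let $b_{\max}:=\sup_{l\ge0}b_{J+l}$. Then $$b_{\max}\le\eta\bar\lambda_1+\frac{\bar\lambda_1}{\eta}\|\mathbf{w}_{J-1}-\mathbf{w}^*\|^2$$ for AdaGrad-Norm, and $$b_{\max}\le\eta\bar\lambda_1+\frac{1}{\eta}\|\mathbf{w}_{J-1}-\mathbf{w}^*\|^2$$ for AdaLoss.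
   Context: This is stochastic (noiseless) linear regression with component losses $f_i(\mathbf{w})=\frac12(\mathbf{x}_i^\top\mathbf{w}-y_i)^2$, so $G_j=\nabla f_{\xi_j}(\mathbf{w}_j)$. $\|\cdot\|$ is the Euclidean norm. *)

theory Defs
  imports "HOL-Analysis.Analysis"
begin

end

theory Submission
  imports Defs
begin

text \<open>Let \<open>e j = w j - w\<^sup>*\<close> and \<open>r j = x (\<xi> j) \<bullet> e j\<close>. Once \<open>b (j + 1) \<ge> \<eta> \<parallel>x (\<xi> j)\<parallel>\<^sup>2\<close>,
  the update is a relaxed projection, so \<open>\<parallel>e (j + 1)\<parallel>\<^sup>2 \<le> \<parallel>e j\<parallel>\<^sup>2 - (\<eta> / b (j + 1)) (r j)\<^sup>2\<close>,
  while \<open>b (j + 1) - b j \<le> (b (j + 1)\<^sup>2 - (b j)\<^sup>2) / b (j + 1) \<le> c (r j)\<^sup>2 / b (j + 1)\<close> with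
  \<open>c = \<lambda>\<^sub>1\<close> for AdaGrad-Norm and \<open>c = 1\<close> for AdaLoss. So from step \<open>J - 1\<close> on, every increment
  of \<open>b\<close> is paid for by a drop of \<open>(c / \<eta>) \<parallel>e\<parallel>\<^sup>2\<close>, and telescoping from \<open>b (J - 1) \<le> \<eta> \<lambda>\<^sub>1\<close>
  gives the bound.\<close>

lemma relaxed_projection_norm_decrease:
  fixes u e :: "'a::real_inner" and t :: real
  assumes "0 \<le> t" and "t * (norm u)\<^sup>2 \<le> 1"
  shows "t * (u \<bullet> e)\<^sup>2 \<le> (norm e)\<^sup>2 - (norm (e - t *\<^sub>R ((u \<bullet> e) *\<^sub>R u)))\<^sup>2"
proof -
  have expand: "(norm (e - t *\<^sub>R ((u \<bullet> e) *\<^sub>R u)))\<^sup>2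
      = (norm e)\<^sup>2 - 2 * t * (u \<bullet> e)\<^sup>2 + t * (u \<bullet> e)\<^sup>2 * (t * (norm u)\<^sup>2)"
    unfolding power2_norm_eq_inner
    by (simp add: inner_diff_left inner_diff_right inner_commute power2_eq_square algebra_simps)
  have "t * (u \<bullet> e)\<^sup>2 * (t * (norm u)\<^sup>2) \<le> t * (u \<bullet> e)\<^sup>2"
    using assms by (simp add: mult_left_le)
  then show ?thesis
    unfolding expand by linarith
qed

lemma sqrt_add_sq_minus_le:
  fixes b q :: real
  assumes "0 \<le> b" and "0 \<le> q" and "0 < sqrt (b\<^sup>2 + q)"
  shows "sqrt (b\<^sup>2 + q) - b \<le> q / sqrt (b\<^sup>2 + q)"
proof -
  define b' where "b' = sqrt (b\<^sup>2 + q)"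
  have "b \<le> b'"
    using assms by (simp add: b'_def real_le_rsqrt)
  then have "(b' - b) * b' \<le> (b' - b) * (b' + b)"
    using assms(1) by (intro mult_left_mono) auto
  also have "\<dots> = q"
    using assms by (simp add: b'_def power2_eq_square algebra_simps)
  finally show ?thesis
    using assms(3) by (simp add: b'_def field_simps)
qed

lemma telescoping_bound:
  fixes b E :: "nat \<Rightarrow> real"
  assumes step: "\<And>j. k \<le> j \<Longrightarrow> b (Suc j) - b j \<le> C * (E j - E (Suc j))"
    and "0 \<le> C" and "\<And>j. 0 \<le> E j"
  shows "b (k + l) \<le> b k + C * E k"
proof -
  have "b (k + l) \<le> b k + C * (E k - E (k + l))"
  proof (induction l)
    case 0
    then show ?case by simp
  next
    case (Suc l)
    then show ?case
      using step[of "k + l"] by (simp add: algebra_simps)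
  qed
  moreover have "0 \<le> C * E (k + l)"
    using assms by simp
  ultimately show ?thesis
    by (simp add: algebra_simps)
qed

lemma adaptive_step_size_bounded:
  fixes u w :: "nat \<Rightarrow> 'a::real_inner" and wstar :: 'a and b q :: "nat \<Rightarrow> real"
  assumes eta: "0 < eta" and c: "0 \<le> c" and b_0: "0 \<le> b 0"
    and norm_u: "\<And>j. (norm (u j))\<^sup>2 \<le> L"
    and b_step: "\<And>j. b (Suc j) = sqrt ((b j)\<^sup>2 + q j)"
    and q_nonneg: "\<And>j. 0 \<le> q j"
    and q_le: "\<And>j. q j \<le> c * (u j \<bullet> (w j - wstar))\<^sup>2"
    and w_step: "\<And>j. w (Suc j) = w j - (eta / b (Suc j)) *\<^sub>R ((u j \<bullet> (w j - wstar)) *\<^sub>R u j)"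
    and below: "b k \<le> eta * L" and above: "eta * L < b (Suc k)"
  shows "b (Suc k + l) \<le> eta * L + (c / eta) * (norm (w k - wstar))\<^sup>2"
proof -
  define E where "E j = (norm (w j - wstar))\<^sup>2" for j
  have L: "0 \<le> L"
    using norm_u[of 0] zero_le_power2[of "norm (u 0)"] by linarith
  have b_nonneg: "0 \<le> b j" for j
    using b_0 b_step q_nonneg by (cases j) auto
  have b_mono: "b j \<le> b (Suc j)" for j
    using b_nonneg[of j] q_nonneg[of j] by (simp add: b_step real_le_rsqrt)
  have b_large: "eta * L < b (Suc j)" if "k \<le> j" for j
    using that
  proof (induction j rule: dec_induct)
    case (step j)
    then show ?case using b_mono[of "Suc j"] by linarith
  qed (rule above)
  have increment: "b (Suc j) - b j \<le> (c / eta) * (E j - E (Suc j))" if "k \<le> j" for j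
  proof -
    define t where "t = eta / b (Suc j)"
    have b_pos: "0 < b (Suc j)"
      using b_large[OF that] mult_nonneg_nonneg[of eta L] eta L by linarith
    have "eta * (norm (u j))\<^sup>2 \<le> eta * L"
      using norm_u eta by simp
    then have t_norm: "t * (norm (u j))\<^sup>2 \<le> 1"
      using b_large[OF that] b_pos by (simp add: t_def field_simps)
    have error_step: "w (Suc j) - wstar = (w j - wstar) - t *\<^sub>R ((u j \<bullet> (w j - wstar)) *\<^sub>R u j)"
      by (simp add: w_step t_def)
    have "0 \<le> t"
      using eta b_pos by (simp add: t_def)
    from relaxed_projection_norm_decrease[OF this t_norm, of "w j - wstar"]
    have decrease: "t * (u j \<bullet> (w j - wstar))\<^sup>2 \<le> E j - E (Suc j)"
      by (simp only: E_def error_step)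
    have "b (Suc j) - b j \<le> q j / b (Suc j)"
      using sqrt_add_sq_minus_le[OF b_nonneg q_nonneg] b_pos by (simp add: b_step)
    also have "\<dots> \<le> c * (u j \<bullet> (w j - wstar))\<^sup>2 / b (Suc j)"
      using q_le b_pos by (simp add: divide_right_mono)
    also have "\<dots> = (c / eta) * (t * (u j \<bullet> (w j - wstar))\<^sup>2)"
      using eta by (simp add: t_def)
    also have "\<dots> \<le> (c / eta) * (E j - E (Suc j))"
      using decrease eta c by (intro mult_left_mono) auto
    finally show ?thesis .
  qed
  have "b (k + Suc l) \<le> b k + (c / eta) * E k"
    by (rule telescoping_bound[where E = E, OF increment]) (use eta c in \<open>simp_all add: E_def\<close>)
  then show ?thesis
    using below by (simp add: E_def)
qed

theorem mainTheorem6: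
  fixes x :: "nat \<Rightarrow> real ^ 'd" and wstar w0 :: "real ^ 'd" and n :: nat
    and eta b0 :: real and xi :: "nat \<Rightarrow> nat"
    and w :: "nat \<Rightarrow> real ^ 'd" and b :: "nat \<Rightarrow> real"
    and adagrad :: bool and J :: nat
  defines "lam1 \<equiv> Max ((\<lambda>i. (norm (x i))\<^sup>2) ` {1..n})"
  assumes eta: "eta > 0" and b0: "b0 > 0"
    and xi: "\<And>j. xi j \<in> {1..n}"
    and w_0: "w 0 = w0" and b_0: "b 0 = b0"
    and b_step: "\<And>j. b (Suc j) = sqrt ((b j)\<^sup>2 +
          (if adagrad
           then (norm ((x (xi j) \<bullet> w j - x (xi j) \<bullet> wstar) *\<^sub>R x (xi j)))\<^sup>2
           else (x (xi j) \<bullet> w j - x (xi j) \<bullet> wstar)\<^sup>2))"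
    and w_step: "\<And>j. w (Suc j) = w j - (eta / b (Suc j)) *\<^sub>R
          ((x (xi j) \<bullet> w j - x (xi j) \<bullet> wstar) *\<^sub>R x (xi j))"
    and J1: "J \<ge> 1" and bJ: "b J > eta * lam1"
    and first: "\<And>j. j < J \<Longrightarrow> b j \<le> eta * lam1"
  shows "bdd_above (range (\<lambda>l. b (J + l))) \<and>
         (SUP l. b (J + l)) \<le>
           (if adagrad then eta * lam1 + (lam1 / eta) * (norm (w (J - 1) - wstar))\<^sup>2
            else eta * lam1 + (1 / eta) * (norm (w (J - 1) - wstar))\<^sup>2)"
proof -
  define c where "c = (if adagrad then lam1 else 1)"
  define r where "r j = x (xi j) \<bullet> (w j - wstar)" for j
  have norm_x: "(norm (x (xi j)))\<^sup>2 \<le> lam1" for j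
    unfolding lam1_def using xi[of j] by (intro Max_ge) auto
  have "0 \<le> lam1"
    using norm_x[of 0] zero_le_power2[of "norm (x (xi 0))"] by linarith
  have "b (Suc (J - 1) + l) \<le> eta * lam1 + (c / eta) * (norm (w (J - 1) - wstar))\<^sup>2" for l
  proof (rule adaptive_step_size_bounded[where u = "\<lambda>j. x (xi j)"])
    show "b (Suc j) = sqrt ((b j)\<^sup>2 +
        (if adagrad then (norm (r j *\<^sub>R x (xi j)))\<^sup>2 else (r j)\<^sup>2))" for j
      by (simp add: b_step r_def inner_diff_right)
    show "(if adagrad then (norm (r j *\<^sub>R x (xi j)))\<^sup>2 else (r j)\<^sup>2)
        \<le> c * (x (xi j) \<bullet> (w j - wstar))\<^sup>2" for j
      using mult_right_mono[OF norm_x[of j] zero_le_power2[of "r j"]]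
      by (simp add: c_def r_def power_mult_distrib mult.commute)
    show "w (Suc j) = w j - (eta / b (Suc j)) *\<^sub>R ((x (xi j) \<bullet> (w j - wstar)) *\<^sub>R x (xi j))" for j
      by (simp add: w_step inner_diff_right)
  qed (use eta b0 b_0 norm_x \<open>0 \<le> lam1\<close> J1 bJ first in \<open>auto simp: c_def r_def\<close>)
  then have bound: "b (J + l) \<le> eta * lam1 + (c / eta) * (norm (w (J - 1) - wstar))\<^sup>2" for l
    using J1 by simp
  have "bdd_above (range (\<lambda>l. b (J + l)))"
    using bound by (intro bdd_aboveI2) auto
  moreover have "(SUP l. b (J + l)) \<le> eta * lam1 + (c / eta) * (norm (w (J - 1) - wstar))\<^sup>2"
    using bound by (intro cSUP_least) auto
  ultimately show ?thesis
    by (cases adagrad) (simp_all add: c_def)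
qed

end
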